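(* In each iteration of Algorithm 1, $i_R=b(i^* )$; that is, for the set $S$ immediately before this iteration, none of the indices $j$ with $i^*\le j<b(i^* )$ belongs to $S$, and $b(i^* )\in S$.
   Context: Problem (P): given an integer $n\ge1$, reals $0<q_1\le\cdots\le q_n$, $z_1,\dots,z_n>0$ and $K>0$, maximize $\sum_{i=1}^n x_i$ subject to $0\le x_i\le q_i$, $0\le x_1\le\cdots\le x_n$, $\sum_{i=1}^n z_ix_i\le K$. For $1\le i<j\le n+1$ let $\mathrm{sum}(i,j)=z_i+\cdots+z_{j-1}$ and $\mathrm{avg}(i,j)=\mathrm{sum}(i,j)/(j-i)$. Algorithm 1 (run on an instance of (P)): Initialize $S=\{0,n+1\}$, $y_i=\mathrm{avg}(i,n+1)$ and $x_i=0$ for $i=1,\dots,n$, and $\hat B=K$. While $\hat B>0$ and $S\ne\{0,1,\dots,n+1\}$, perform an iteration: let $i^*$ be the index $i\in\{1,\dots,n\}\setminus S$ minimizing $y_i$, ties broken in favour of the smallest index; let $i_L=\max\{j\in S:j<i^*\}$ and $i_R=\min\{j\in S:j>i^*\}$; set $d=\min\{\hat B/((i_R-i^* )y_{i^*}),\ q_{i^*}-x_{i^*}\}$; set $\hat B\leftarrow\hat B-d(i_R-i^* )y_{i^*}$; set $x_i\leftarrow x_i+d$ for all $i^*\le i<i_R$; set $y_i\leftarrow\mathrm{avg}(i,i^* )$ for all $i_L<i<i^*$; add $i^*$ to $S$. Finally output $x_1,\dots,x_n$. Blocker: for $1\le i\le n$, $b(i)$ is the value of $i^*$ in the last iteration in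 which $y_i$ is updated (i.e. the last iteration with $i_L<i<i^*$); if $y_i$ is never updated, $b(i)=n+1$. *)

theory Defs
  imports Complex_Main
begin

record alg_state =
  SS :: "nat set"
  yy :: "nat \<Rightarrow> real"
  xx :: "nat \<Rightarrow> real"
  BB :: real

definition avg :: "(nat \<Rightarrow> real) \<Rightarrow> nat \<Rightarrow> nat \<Rightarrow> real" where
  "avg z i j = (\<Sum>k=i..<j. z k) / real (j - i)"

definition alg_init :: "nat \<Rightarrow> (nat \<Rightarrow> real) \<Rightarrow> real \<Rightarrow> alg_state" where
  "alg_init n z K = \<lparr>SS = {0, n+1}, yy = (\<lambda>i. avg z i (n+1)), xx = (\<lambda>_. 0), BB = K\<rparr>"

definition istar :: "nat \<Rightarrow> alg_state \<Rightarrow> nat" where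
  "istar n s = (LEAST i. i \<in> {1..n} - SS s \<and> (\<forall>j \<in> {1..n} - SS s. yy s i \<le> yy s j))"

definition iL :: "alg_state \<Rightarrow> nat \<Rightarrow> nat" where
  "iL s i = Max {j \<in> SS s. j < i}"

definition iR :: "alg_state \<Rightarrow> nat \<Rightarrow> nat" where
  "iR s i = Min {j \<in> SS s. i < j}"

definition alg_step :: "nat \<Rightarrow> (nat \<Rightarrow> real) \<Rightarrow> (nat \<Rightarrow> real) \<Rightarrow> alg_state \<Rightarrow> alg_state" where
  "alg_step n q z s =
     (let i = istar n s; l = iL s i; r = iR s i;
          d = min (BB s / (real (r - i) * yy s i)) (q i - xx s i)
      in \<lparr>SS = insert i (SS s),
          yy = (\<lambda>j. if l < j \<and> j < i then avg z j i else yy s j),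
          xx = (\<lambda>j. if i \<le> j \<and> j < r then xx s j + d else xx s j),
          BB = BB s - d * real (r - i) * yy s i\<rparr>)"

definition alg_running :: "nat \<Rightarrow> alg_state \<Rightarrow> bool" where
  "alg_running n s \<longleftrightarrow> BB s > 0 \<and> SS s \<noteq> {0..n+1}"

text \<open>State immediately before iteration k (iterations counted from 0).\<close>
definition alg_state_at :: "nat \<Rightarrow> (nat \<Rightarrow> real) \<Rightarrow> (nat \<Rightarrow> real) \<Rightarrow> real \<Rightarrow> nat \<Rightarrow> alg_state" where
  "alg_state_at n q z K k = (alg_step n q z ^^ k) (alg_init n z K)"

definition performed :: "nat \<Rightarrow> (nat \<Rightarrow> real) \<Rightarrow> (nat \<Rightarrow> real) \<Rightarrow> real \<Rightarrow> nat \<Rightarrow> bool" where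
  "performed n q z K k \<longleftrightarrow> (\<forall>m\<le>k. alg_running n (alg_state_at n q z K m))"

definition updates_y :: "nat \<Rightarrow> (nat \<Rightarrow> real) \<Rightarrow> (nat \<Rightarrow> real) \<Rightarrow> real \<Rightarrow> nat \<Rightarrow> nat \<Rightarrow> bool" where
  "updates_y n q z K k i \<longleftrightarrow> performed n q z K k \<and>
     (let s = alg_state_at n q z K k in iL s (istar n s) < i \<and> i < istar n s)"

definition blocker :: "nat \<Rightarrow> (nat \<Rightarrow> real) \<Rightarrow> (nat \<Rightarrow> real) \<Rightarrow> real \<Rightarrow> nat \<Rightarrow> nat" where
  "blocker n q z K i =
     (if \<exists>k. updates_y n q z K k i
      then istar n (alg_state_at n q z K (GREATEST k. updates_y n q z K k i))
      else n + 1)"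

end

theory Submission
  imports Defs
begin

text \<open>Fix the index i chosen as i* in iteration k. Before that iteration i \<notin> S, and the
  condition i_L < i < i* of an iteration says exactly that its i* falls strictly between i
  and the right neighbour min {j \<in> S. i < j} of i in S. Hence this right neighbour starts
  at n+1 and changes precisely in the iterations that update y_i, each time becoming their
  i*; so before iteration k it is the i* of the last such iteration. No iteration from k on
  updates y_i: in iteration k itself i* = i, and afterwards i \<in> S forces i_L \<ge> i.
  Only the combinatorics of S enter.\<close>

lemma last_update_eq:
  assumes "\<And>m. m < k \<Longrightarrow> f (Suc m) = (if P m then g m else f m)"
  shows "f k = (if \<exists>m<k. P m then g (GREATEST m. m < k \<and> P m) else f 0)"
  using assms
proof (induction k)
  case 0
  then show ?case by simp
next
  case (Suc k)
  show ?case
  proof (cases "P k")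
    case True
    have "(GREATEST m. m < Suc k \<and> P m) = k"
      using True by (intro Greatest_equality) auto
    then show ?thesis using Suc.prems True by auto
  next
    case False
    then have "(\<lambda>m. m < Suc k \<and> P m) = (\<lambda>m. m < k \<and> P m)"
      using less_Suc_eq by auto
    then have "(\<exists>m<Suc k. P m) = (\<exists>m<k. P m)"
      and "(GREATEST m. m < Suc k \<and> P m) = (GREATEST m. m < k \<and> P m)"
      by metis+
    moreover have "f (Suc k) = f k"
      using Suc.prems False by simp
    moreover have "f k = (if \<exists>m<k. P m then g (GREATEST m. m < k \<and> P m) else f 0)"
      using Suc by simp
    ultimately show ?thesis
      by (simp only:)
  qed
qed

lemma alg_state_at_Suc:
  "alg_state_at n q z K (Suc k) = alg_step n q z (alg_state_at n q z K k)"
  by (simp add: alg_state_at_def)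

lemma SS_alg_state_at_Suc:
  "SS (alg_state_at n q z K (Suc k)) =
     insert (istar n (alg_state_at n q z K k)) (SS (alg_state_at n q z K k))"
  by (simp add: alg_state_at_Suc alg_step_def Let_def)

lemma SS_alg_state_at_mono:
  "k \<le> k' \<Longrightarrow> SS (alg_state_at n q z K k) \<subseteq> SS (alg_state_at n q z K k')"
proof (induction k' rule: dec_induct)
  case (step m)
  then show ?case using SS_alg_state_at_Suc[of n q z K m] by blast
qed simp

lemma performed_mono: "performed n q z K k \<Longrightarrow> k' \<le> k \<Longrightarrow> performed n q z K k'"
  by (simp add: performed_def)

lemma istar_mem:
  assumes "{1..n} - SS s \<noteq> {}"
  shows "istar n s \<in> {1..n} - SS s"
proof -
  let ?A = "{1..n} - SS s"
  have "Min (yy s ` ?A) \<in> yy s ` ?A"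
    using assms by (intro Min_in) auto
  then obtain i where "i \<in> ?A" "yy s i = Min (yy s ` ?A)"
    by auto
  then have "i \<in> ?A \<and> (\<forall>j\<in>?A. yy s i \<le> yy s j)"
    by simp
  then show ?thesis
    unfolding istar_def by (rule LeastI2) blast
qed

lemma interior_diff_nonempty:
  fixes S :: "nat set"
  assumes "{0, n+1} \<subseteq> S" "S \<subseteq> {0..n+1}" "S \<noteq> {0..n+1}"
  shows "{1..n} - S \<noteq> {}"
proof
  assume interior: "{1..n} - S = {}"
  have "x \<in> S" if "x \<in> {0..n+1}" for x
    using that assms(1) interior by (cases "x = 0 \<or> x = n+1") auto
  then show False
    using assms(2,3) by blast
qed

lemma SS_alg_state_at_bounds:
  "performed n q z K k \<Longrightarrow>
     {0, n+1} \<subseteq> SS (alg_state_at n q z K k) \<and> SS (alg_state_at n q z K k) \<subseteq> {0..n+1}"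
proof (induction k)
  case 0
  then show ?case by (simp add: alg_state_at_def alg_init_def)
next
  case (Suc k)
  let ?S = "SS (alg_state_at n q z K k)"
  have bounds: "{0, n+1} \<subseteq> ?S" "?S \<subseteq> {0..n+1}"
    using Suc performed_mono[OF Suc.prems] by auto
  have "?S \<noteq> {0..n+1}"
    using Suc.prems by (auto simp: performed_def alg_running_def)
  then have "{1..n} - ?S \<noteq> {}"
    by (rule interior_diff_nonempty[OF bounds])
  then show ?case
    using bounds istar_mem SS_alg_state_at_Suc[of n q z K k] by fastforce
qed

lemma istar_alg_state_at:
  assumes "performed n q z K k"
  shows "istar n (alg_state_at n q z K k) \<in> {1..n} - SS (alg_state_at n q z K k)"
proof (rule istar_mem, rule interior_diff_nonempty)
  show "{0, n+1} \<subseteq> SS (alg_state_at n q z K k)" "SS (alg_state_at n q z K k) \<subseteq> {0..n+1}"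
    using SS_alg_state_at_bounds[OF assms] by auto
  show "SS (alg_state_at n q z K k) \<noteq> {0..n+1}"
    using assms by (simp add: performed_def alg_running_def)
qed

lemma iR_least:
  assumes "finite (SS s)" "j \<in> SS s" "i < j"
  shows "iR s i \<in> SS s" "i < iR s i" "\<forall>j'\<in>SS s. i < j' \<longrightarrow> iR s i \<le> j'"
proof -
  have "Min {j \<in> SS s. i < j} \<in> {j \<in> SS s. i < j}"
    using assms by (intro Min_in) auto
  then show "iR s i \<in> SS s" "i < iR s i"
    by (simp_all add: iR_def)
  show "\<forall>j'\<in>SS s. i < j' \<longrightarrow> iR s i \<le> j'"
    using assms(1) by (simp add: iR_def)
qed

lemma iR_insert:
  assumes "SS s' = insert I (SS s)" "finite (SS s)" "j \<in> SS s" "i < j"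
  shows "iR s' i = (if i < I then min I (iR s i) else iR s i)"
proof -
  let ?A = "{j \<in> SS s. i < j}"
  have A: "finite ?A" "?A \<noteq> {}"
    using assms(2-4) by auto
  show ?thesis
  proof (cases "i < I")
    case True
    then have "{j \<in> SS s'. i < j} = insert I ?A"
      using assms(1) by auto
    then show ?thesis
      using A True by (simp add: iR_def Min_insert)
  next
    case False
    then have "{j \<in> SS s'. i < j} = ?A"
      using assms(1) by auto
    then show ?thesis
      using False by (simp add: iR_def)
  qed
qed

lemma updates_y_iff:
  assumes "performed n q z K k" "i \<notin> SS (alg_state_at n q z K k)" "i \<le> n"
  shows "updates_y n q z K k i \<longleftrightarrow>
           i < istar n (alg_state_at n q z K k)
         \<and> istar n (alg_state_at n q z K k) < iR (alg_state_at n q z K k) i"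
proof -
  let ?s = "alg_state_at n q z K k"
  let ?I = "istar n ?s"
  have I: "?I \<in> {1..n} - SS ?s"
    using istar_alg_state_at[OF assms(1)] .
  have bounds: "{0, n+1} \<subseteq> SS ?s" "finite (SS ?s)"
    using SS_alg_state_at_bounds[OF assms(1)] finite_subset by auto
  have "iL ?s ?I < i \<longleftrightarrow> (\<forall>j\<in>SS ?s. j < ?I \<longrightarrow> j < i)"
    unfolding iL_def using bounds I by (subst Max_less_iff) auto
  moreover have "?I < iR ?s i \<longleftrightarrow> (\<forall>j\<in>SS ?s. i < j \<longrightarrow> ?I < j)"
    unfolding iR_def using bounds assms(3) by (subst Min_gr_iff) auto
  moreover have "(\<forall>j\<in>SS ?s. j < ?I \<longrightarrow> j < i) \<longleftrightarrow> (\<forall>j\<in>SS ?s. i < j \<longrightarrow> ?I < j)"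
    if "i < ?I"
    using I assms(2) that by (metis DiffD2 linorder_not_le order_le_less)
  ultimately show ?thesis
    using assms(1) by (auto simp: updates_y_def Let_def)
qed

lemma iR_alg_state_at_Suc:
  assumes "performed n q z K k" "i \<notin> SS (alg_state_at n q z K (Suc k))" "i \<le> n"
  shows "iR (alg_state_at n q z K (Suc k)) i =
           (if updates_y n q z K k i then istar n (alg_state_at n q z K k)
            else iR (alg_state_at n q z K k) i)"
proof -
  let ?s = "alg_state_at n q z K k"
  let ?I = "istar n ?s"
  have bounds: "n+1 \<in> SS ?s" "finite (SS ?s)"
    using SS_alg_state_at_bounds[OF assms(1)] finite_subset by auto
  have i: "i \<notin> SS ?s"
    using assms(2) SS_alg_state_at_mono[of k "Suc k" n q z K] by auto
  have "?I \<noteq> iR ?s i"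
    using istar_alg_state_at[OF assms(1)] iR_least(1)[OF bounds(2,1)] assms(3) by auto
  then show ?thesis
    using iR_insert[OF SS_alg_state_at_Suc bounds(2,1)] updates_y_iff[OF assms(1) i assms(3)] assms(3)
    by (auto simp: min_def)
qed

lemma iR_alg_state_at_0:
  assumes "1 \<le> i" "i \<le> n"
  shows "iR (alg_state_at n q z K 0) i = n + 1"
proof -
  have "{j \<in> {0, n+1}. i < j} = {n+1}"
    using assms by auto
  then show ?thesis
    by (simp add: iR_def alg_state_at_def alg_init_def)
qed

lemma updates_y_istar_before:
  assumes "updates_y n q z K k' (istar n (alg_state_at n q z K k))"
  shows "k' < k"
proof (rule ccontr)
  let ?i = "istar n (alg_state_at n q z K k)"
  let ?s = "alg_state_at n q z K k'"
  let ?I = "istar n ?s"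
  assume "\<not> k' < k"
  have upd: "performed n q z K k'" "iL ?s ?I < ?i" "?i < ?I"
    using assms by (simp_all add: updates_y_def Let_def)
  then have "k' \<noteq> k"
    by auto
  with \<open>\<not> k' < k\<close> have "?i \<in> SS ?s"
    using SS_alg_state_at_mono[of "Suc k" k' n q z K] SS_alg_state_at_Suc[of n q z K k] by auto
  moreover have "finite (SS ?s)"
    using SS_alg_state_at_bounds[OF upd(1)] finite_subset by auto
  ultimately have "?i \<le> iL ?s ?I"
    unfolding iL_def using upd(3) by (intro Max_ge) auto
  then show False
    using upd(2) by simp
qed

lemma iR_istar_eq_blocker:
  assumes perf: "performed n q z K k"
  defines "i \<equiv> istar n (alg_state_at n q z K k)"
  shows "iR (alg_state_at n q z K k) i = blocker n q z K i"
proof -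
  define st where "st = alg_state_at n q z K"
  define upd where "upd = (\<lambda>m. updates_y n q z K m i)"
  have i: "i \<in> {1..n} - SS (st k)"
    using istar_alg_state_at[OF perf] by (simp add: i_def st_def)
  have "iR (st k) i =
          (if \<exists>m<k. upd m then istar n (st (GREATEST m. m < k \<and> upd m)) else iR (st 0) i)"
  proof (rule last_update_eq)
    fix m assume "m < k"
    then have "i \<notin> SS (st (Suc m))"
      using i SS_alg_state_at_mono[of "Suc m" k n q z K] by (auto simp: st_def)
    then show "iR (st (Suc m)) i = (if upd m then istar n (st m) else iR (st m) i)"
      using iR_alg_state_at_Suc performed_mono[OF perf] \<open>m < k\<close> i by (simp add: st_def upd_def)
  qed
  also have "\<dots> = blocker n q z K i"
  proof -
    have "(\<lambda>m. m < k \<and> upd m) = upd"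
      using updates_y_istar_before by (auto simp: upd_def i_def st_def)
    then show ?thesis
      using iR_alg_state_at_0 i by (simp add: blocker_def upd_def st_def)
  qed
  finally show ?thesis
    by (simp add: st_def)
qed

theorem lemma7:
  fixes n :: nat and q z :: "nat \<Rightarrow> real" and K :: real and k :: nat
  assumes "n \<ge> 1"
    and "\<forall>i\<in>{1..n}. 0 < q i"
    and "\<forall>i j. 1 \<le> i \<and> i \<le> j \<and> j \<le> n \<longrightarrow> q i \<le> q j"
    and "\<forall>i\<in>{1..n}. 0 < z i"
    and "K > 0"
    and "performed n q z K k"
  shows "iR (alg_state_at n q z K k) (istar n (alg_state_at n q z K k))
           = blocker n q z K (istar n (alg_state_at n q z K k))
       \<and> (\<forall>j. istar n (alg_state_at n q z K k) \<le> j
              \<and> j < blocker n q z K (istar n (alg_state_at n q z K k))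
              \<longrightarrow> j \<notin> SS (alg_state_at n q z K k))
       \<and> blocker n q z K (istar n (alg_state_at n q z K k)) \<in> SS (alg_state_at n q z K k)"
proof -
  define s where "s = alg_state_at n q z K k"
  define i where "i = istar n s"
  have i: "i \<in> {1..n} - SS s"
    using istar_alg_state_at[OF assms(6)] by (simp add: i_def s_def)
  have "finite (SS s)" "n + 1 \<in> SS s" "i < n + 1"
    using SS_alg_state_at_bounds[OF assms(6)] finite_subset i by (auto simp: s_def)
  note successor = iR_least[OF this]
  have iR_eq: "iR s i = blocker n q z K i"
    using iR_istar_eq_blocker[OF assms(6)] by (simp add: s_def i_def)
  have "j \<notin> SS s" if "i \<le> j" "j < iR s i" for j
    using that i successor(3) by (cases "i = j") auto
  then show ?thesis
    using successor(1) iR_eq unfolding s_def i_def by auto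
qed

end
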